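(* Let $n\ge2$ and let $\equiv$ be a lattice congruence of the weak order on $S_n$. The following are equivalent: (i) $\mathrm{id}_n\equiv c_{n-1}(\mathrm{id}_{n-1})$; (ii) there is $\pi\in S_{n-1}$ such that $c_i(\pi)\equiv c_{i+1}(\pi)$ for all $1\le i<n$; (iii) for all $\pi\in S_{n-1}$ and all $1\le i<n$, $c_i(\pi)\equiv c_{i+1}(\pi)$.
   Context: $S_n$ is the set of permutations of $[n]$ in one-line notation, ordered by the weak order (inclusion of inversion sets $\mathrm{inv}(\pi)=\{(a_i,a_j):i<j,\ a_i>a_j\}$), which is a lattice. A lattice congruence is an equivalence relation on $S_n$ compatible with joins and meets: $\pi\equiv\pi'$ and $\rho\equiv\rho'$ imply $\pi\vee\rho\equiv\pi'\vee\rho'$ and $\pi\wedge\rho\equiv\pi'\wedge\rho'$. $\mathrm{id}_n=12\cdots n$. For $\pi\in S_{n-1}$ and $1\le i\le n$, $c_i(\pi)\in S_n$ is obtained by inserting the value $n$ at position $i$ of $\pi$. *)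

theory Defs
  imports Main
begin

definition perms :: "nat \<Rightarrow> nat list set" where
  "perms n = {xs. distinct xs \<and> set xs = {1..n}}"

definition inv_set :: "nat list \<Rightarrow> (nat \<times> nat) set" where
  "inv_set xs = {(xs ! i, xs ! j) | i j. i < j \<and> j < length xs \<and> xs ! i > xs ! j}"

definition weak_le :: "nat list \<Rightarrow> nat list \<Rightarrow> bool" where
  "weak_le p q \<longleftrightarrow> inv_set p \<subseteq> inv_set q"

definition is_join :: "nat \<Rightarrow> nat list \<Rightarrow> nat list \<Rightarrow> nat list \<Rightarrow> bool" where
  "is_join n p q r \<longleftrightarrow> r \<in> perms n \<and> weak_le p r \<and> weak_le q r \<and>
     (\<forall>s\<in>perms n. weak_le p s \<and> weak_le q s \<longrightarrow> weak_le r s)"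

definition is_meet :: "nat \<Rightarrow> nat list \<Rightarrow> nat list \<Rightarrow> nat list \<Rightarrow> bool" where
  "is_meet n p q r \<longleftrightarrow> r \<in> perms n \<and> weak_le r p \<and> weak_le r q \<and>
     (\<forall>s\<in>perms n. weak_le s p \<and> weak_le s q \<longrightarrow> weak_le s r)"

definition lattice_congruence :: "nat \<Rightarrow> (nat list \<times> nat list) set \<Rightarrow> bool" where
  "lattice_congruence n R \<longleftrightarrow> equiv (perms n) R \<and>
     (\<forall>p p' q q' r r'. (p, p') \<in> R \<longrightarrow> (q, q') \<in> R \<longrightarrow>
        (is_join n p q r \<longrightarrow> is_join n p' q' r' \<longrightarrow> (r, r') \<in> R) \<and>
        (is_meet n p q r \<longrightarrow> is_meet n p' q' r' \<longrightarrow> (r, r') \<in> R))"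

definition id_perm :: "nat \<Rightarrow> nat list" where
  "id_perm n = [1..<n+1]"

text \<open>c_i(pi): insert the value n = length pi + 1 at position i (1-indexed).\<close>
definition ins_max :: "nat \<Rightarrow> nat list \<Rightarrow> nat list" where
  "ins_max i p = take (i - 1) p @ [length p + 1] @ drop (i - 1) p"

end

theory Submission
  imports Defs
begin

text \<open>
  Inversion sets are transitive and co-transitive (if \<open>a > b > c\<close> and \<open>(a, c)\<close> is an inversion,
  then so is \<open>(a, b)\<close> or \<open>(b, c)\<close>). Hence a join or meet is the union or intersection of the
  inversion sets whenever that is again an inversion set; otherwise the one missing pair is forced
  in, resp. out, by (co-)transitivity.

  Let \<open>s = c\<^sub>n\<^sub>-\<^sub>1(id)\<close>, whose only inversion is \<open>(n, n-1)\<close>. If \<open>id \<equiv> s\<close>, joining with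
  any permutation in which \<open>n-1\<close> immediately precedes \<open>n\<close> contracts that adjacent swap. For an
  adjacent pair \<open>b n\<close> with \<open>b < n-1\<close>, the patterns \<open>(n-1) b n\<close> and \<open>b n (n-1)\<close> are contracted
  first, by a join resp. a meet together with the convexity of congruence classes; then \<open>n-1\<close> is
  moved next to \<open>b\<close>, by a join if it lies to the left of \<open>b\<close> and by a meet if it lies to the
  right. Conversely, meeting a contracted swap of \<open>n-1\<close> and \<open>n\<close> with \<open>s\<close> yields \<open>id \<equiv> s\<close>.
\<close>

lemma inv_set_Nil [simp]: "inv_set [] = {}"
  unfolding inv_set_def by simp

lemma inv_set_Cons:
  "inv_set (x # xs) = {(x, y) | y. y \<in> set xs \<and> y < x} \<union> inv_set xs"
  (is "?l = ?r")
proof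
  show "?l \<subseteq> ?r"
  proof
    fix q assume "q \<in> ?l"
    then obtain i j where q: "q = ((x#xs)!i, (x#xs)!j)" "i < j" "j < Suc (length xs)"
        "(x#xs)!j < (x#xs)!i"
      unfolding inv_set_def by auto
    then obtain j' where j: "j = Suc j'" by (cases j) auto
    show "q \<in> ?r"
    proof (cases i)
      case 0
      then show ?thesis using q j by auto
    next
      case (Suc i')
      then show ?thesis using q j unfolding inv_set_def by auto
    qed
  qed
  have "(x, xs ! j) \<in> ?l" if "j < length xs" "xs ! j < x" for j
    using that unfolding inv_set_def by force
  moreover have "(xs ! i, xs ! j) \<in> ?l" if "i < j" "j < length xs" "xs ! j < xs ! i" for i j
    using that unfolding inv_set_def by force
  ultimately show "?r \<subseteq> ?l"
    unfolding inv_set_def by (auto simp: in_set_conv_nth)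
qed

lemma inv_set_append:
  "inv_set (xs @ ys) = inv_set xs \<union> inv_set ys \<union> {(x, y). x \<in> set xs \<and> y \<in> set ys \<and> y < x}"
  by (induction xs) (auto simp: inv_set_Cons)

lemmas inv_set_simps = inv_set_Cons inv_set_append

lemma inv_set_subset: "inv_set xs \<subseteq> set xs \<times> set xs"
  by (induction xs) (auto simp: inv_set_Cons)

lemma inv_set_less: "(x, y) \<in> inv_set xs \<Longrightarrow> y < x"
  unfolding inv_set_def by auto

lemma inv_set_sorted: "sorted xs \<Longrightarrow> inv_set xs = {}"
  by (induction xs) (auto simp: inv_set_Cons)

lemma inv_set_trans:
  "distinct s \<Longrightarrow> (x, y) \<in> inv_set s \<Longrightarrow> (y, z) \<in> inv_set s \<Longrightarrow> (x, z) \<in> inv_set s"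
proof (induction s)
  case (Cons a s)
  then show ?case
    using inv_set_subset[of s] inv_set_less[of _ _ s] by (auto simp: inv_set_Cons) (meson less_trans)
qed simp

lemma inv_set_cotrans:
  "distinct s \<Longrightarrow> (x, z) \<in> inv_set s \<Longrightarrow> y \<in> set s \<Longrightarrow> z < y \<Longrightarrow> y < x
    \<Longrightarrow> (x, y) \<in> inv_set s \<or> (y, z) \<in> inv_set s"
proof (induction s)
  case (Cons a s)
  then show ?case
    using inv_set_subset[of s] inv_set_less[of _ _ s] by (auto simp: inv_set_Cons)
qed simp

lemma length_perms: "p \<in> perms m \<Longrightarrow> length p = m"
  unfolding perms_def using distinct_card by fastforce

lemma id_perm_in_perms: "id_perm n \<in> perms n"
  unfolding id_perm_def perms_def by auto

lemma inv_set_id_perm: "inv_set (id_perm n) = {}"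
  unfolding id_perm_def by (rule inv_set_sorted) (simp del: upt_Suc)

lemma ins_max_pred_id_perm:
  "0 < c \<Longrightarrow> ins_max c (id_perm c) = [1..<c] @ [Suc c, c]"
  unfolding ins_max_def id_perm_def by (cases c) auto

lemma ins_max_pred_id_perm_in_perms: "0 < c \<Longrightarrow> ins_max c (id_perm c) \<in> perms (Suc c)"
  unfolding ins_max_pred_id_perm perms_def by auto

lemma inv_set_ins_max_pred_id_perm:
  "0 < c \<Longrightarrow> inv_set (ins_max c (id_perm c)) = {(Suc c, c)}"
  unfolding ins_max_pred_id_perm by (auto simp: inv_set_simps inv_set_sorted)

lemma is_join_if_inv_set_Un:
  "r \<in> perms n \<Longrightarrow> inv_set r = inv_set p \<union> inv_set q \<Longrightarrow> is_join n p q r"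
  unfolding is_join_def weak_le_def by auto

lemma is_meet_if_inv_set_Int:
  "r \<in> perms n \<Longrightarrow> inv_set r = inv_set p \<inter> inv_set q \<Longrightarrow> is_meet n p q r"
  unfolding is_meet_def weak_le_def by auto

locale weak_order_congruence =
  fixes n :: nat and R :: "(nat list \<times> nat list) set"
  assumes lattice_congruence: "lattice_congruence n R"
begin

lemma equiv_perms: "equiv (perms n) R"
  using lattice_congruence unfolding lattice_congruence_def by blast

lemma cong_refl: "p \<in> perms n \<Longrightarrow> (p, p) \<in> R"
  using equiv_perms unfolding equiv_def refl_on_def by blast

lemma cong_sym: "(p, q) \<in> R \<Longrightarrow> (q, p) \<in> R"
  using equiv_perms unfolding equiv_def sym_def by blast

lemma cong_trans: "(p, q) \<in> R \<Longrightarrow> (q, r) \<in> R \<Longrightarrow> (p, r) \<in> R"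
  using equiv_perms unfolding equiv_def trans_def by blast

lemma cong_in_perms: "(p, q) \<in> R \<Longrightarrow> p \<in> perms n \<and> q \<in> perms n"
  using equiv_perms unfolding equiv_def refl_on_def by blast

lemma cong_join:
  "(p, p') \<in> R \<Longrightarrow> (q, q') \<in> R \<Longrightarrow> is_join n p q r \<Longrightarrow> is_join n p' q' r' \<Longrightarrow> (r, r') \<in> R"
  using lattice_congruence unfolding lattice_congruence_def by blast

lemma cong_meet:
  "(p, p') \<in> R \<Longrightarrow> (q, q') \<in> R \<Longrightarrow> is_meet n p q r \<Longrightarrow> is_meet n p' q' r' \<Longrightarrow> (r, r') \<in> R"
  using lattice_congruence unfolding lattice_congruence_def by blast

lemma cong_interval:
  assumes "(p, q) \<in> R" "r \<in> perms n" "weak_le p r" "weak_le r q"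
  shows "(p, r) \<in> R" and "(r, q) \<in> R"
proof -
  have q: "q \<in> perms n" using cong_in_perms[OF assms(1)] by blast
  have "is_join n r p r" and "is_join n r q q"
    using assms q unfolding weak_le_def by (auto intro: is_join_if_inv_set_Un)
  then show rq: "(r, q) \<in> R" using cong_join[OF cong_refl[OF assms(2)] assms(1)] by blast
  show "(p, r) \<in> R" using cong_trans[OF assms(1) cong_sym[OF rq]] .
qed

lemma id_cong_pred_swap_if_cong_swap:
  assumes c: "0 < c" "n = Suc c" and swap: "(al @ [n, c] @ be, al @ [c, n] @ be) \<in> R"
  shows "(id_perm n, ins_max c (id_perm c)) \<in> R"
proof -
  let ?s = "ins_max c (id_perm c)"
  have s: "?s \<in> perms n" and inv_s: "inv_set ?s = {(n, c)}"
    using ins_max_pred_id_perm_in_perms inv_set_ins_max_pred_id_perm c by auto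
  have "distinct (al @ [c, n] @ be)"
    using cong_in_perms[OF swap] unfolding perms_def by blast
  then have "(n, c) \<notin> inv_set (al @ [c, n] @ be)"
    using inv_set_less inv_set_subset[of al] inv_set_subset[of be] by (auto simp: inv_set_simps)
  moreover have "(n, c) \<in> inv_set (al @ [n, c] @ be)"
    using c by (auto simp: inv_set_simps)
  ultimately have "is_meet n (al @ [n, c] @ be) ?s ?s"
    and "is_meet n (al @ [c, n] @ be) ?s (id_perm n)"
    using s inv_s by (auto intro!: is_meet_if_inv_set_Int simp: id_perm_in_perms inv_set_id_perm)
  then show ?thesis using cong_sym cong_meet[OF swap cong_refl[OF s]] by blast
qed

end

locale pred_swap_contracted = weak_order_congruence +
  fixes c :: nat
  assumes pred: "0 < c" "n = Suc c"
    and id_cong_pred_swap: "(id_perm n, ins_max c (id_perm c)) \<in> R"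
begin

lemma cong_swap_pred:
  assumes p: "al @ [c, n] @ be \<in> perms n"
  shows "(al @ [c, n] @ be, al @ [n, c] @ be) \<in> R"
proof -
  have "distinct (al @ [c, n] @ be)" using p unfolding perms_def by blast
  then have "inv_set (al @ [n, c] @ be)
      = inv_set (ins_max c (id_perm c)) \<union> inv_set (al @ [c, n] @ be)"
    using pred by (auto simp: inv_set_ins_max_pred_id_perm inv_set_simps)
  moreover have "al @ [n, c] @ be \<in> perms n" using p unfolding perms_def by auto
  ultimately have "is_join n (ins_max c (id_perm c)) (al @ [c, n] @ be) (al @ [n, c] @ be)"
    by (rule is_join_if_inv_set_Un[rotated])
  moreover have "is_join n (id_perm n) (al @ [c, n] @ be) (al @ [c, n] @ be)"
    using p by (simp add: is_join_if_inv_set_Un inv_set_id_perm)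
  ultimately show ?thesis using cong_join[OF id_cong_pred_swap cong_refl[OF p]] by blast
qed

lemma cong_rotate_pred:
  assumes "b < c" and p: "al @ [c, b, n] @ be \<in> perms n"
  shows "(al @ [c, b, n] @ be, al @ [n, c, b] @ be) \<in> R"
proof -
  have d: "distinct (al @ [c, b, n] @ be)" using p unfolding perms_def by blast
  have "(al @ [b, c, n] @ be, al @ [b, n, c] @ be) \<in> R"
    using cong_swap_pred[of "al @ [b]" be] p unfolding perms_def by auto
  moreover have "is_join n (al @ [b, c, n] @ be) (al @ [c, b, n] @ be) (al @ [c, b, n] @ be)"
    by (rule is_join_if_inv_set_Un[OF p]) (use d assms pred in \<open>auto simp: inv_set_simps\<close>)
  moreover have "is_join n (al @ [b, n, c] @ be) (al @ [c, b, n] @ be) (al @ [n, c, b] @ be)"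
    unfolding is_join_def weak_le_def
  proof (intro conjI ballI impI)
    show "al @ [n, c, b] @ be \<in> perms n" using p unfolding perms_def by auto
    show "inv_set (al @ [b, n, c] @ be) \<subseteq> inv_set (al @ [n, c, b] @ be)"
      and "inv_set (al @ [c, b, n] @ be) \<subseteq> inv_set (al @ [n, c, b] @ be)"
      using d assms pred by (auto simp: inv_set_simps)
    fix s assume "s \<in> perms n" and
      s: "inv_set (al @ [b, n, c] @ be) \<subseteq> inv_set s \<and> inv_set (al @ [c, b, n] @ be) \<subseteq> inv_set s"
    moreover have "(n, c) \<in> inv_set (al @ [b, n, c] @ be)" "(c, b) \<in> inv_set (al @ [c, b, n] @ be)"
      using assms pred by (auto simp: inv_set_simps)
    ultimately have "(n, b) \<in> inv_set s"
      using inv_set_trans[of s n c b] unfolding perms_def by blast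
    moreover have "inv_set (al @ [n, c, b] @ be)
        \<subseteq> inv_set (al @ [b, n, c] @ be) \<union> inv_set (al @ [c, b, n] @ be) \<union> {(n, b)}"
      using d assms pred by (auto simp: inv_set_simps)
    ultimately show "inv_set (al @ [n, c, b] @ be) \<subseteq> inv_set s" using s by blast
  qed
  ultimately show ?thesis using cong_join cong_refl[OF p] by blast
qed

lemma cong_swap_top_right_of_pred:
  assumes "b < c" and p: "al @ [c, b, n] @ be \<in> perms n"
  shows "(al @ [c, b, n] @ be, al @ [c, n, b] @ be) \<in> R"
proof (rule cong_interval(1)[OF cong_rotate_pred[OF assms]])
  show "al @ [c, n, b] @ be \<in> perms n" using p unfolding perms_def by auto
  have "distinct (al @ [c, b, n] @ be)" using p unfolding perms_def by blast
  then show "weak_le (al @ [c, b, n] @ be) (al @ [c, n, b] @ be)"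
    and "weak_le (al @ [c, n, b] @ be) (al @ [n, c, b] @ be)"
    unfolding weak_le_def using assms pred by (auto simp: inv_set_simps)
qed

lemma cong_swap_top_left_of_pred:
  assumes "b < c" and p: "al @ [b, n, c] @ be \<in> perms n"
  shows "(al @ [b, n, c] @ be, al @ [n, b, c] @ be) \<in> R"
proof -
  have d: "distinct (al @ [b, n, c] @ be)" using p unfolding perms_def by blast
  have perm: "al @ [c, b, n] @ be \<in> perms n" "al @ [c, n, b] @ be \<in> perms n"
      "al @ [n, b, c] @ be \<in> perms n" "al @ [b, c, n] @ be \<in> perms n"
    using p unfolding perms_def by auto
  have "(al @ [c, n, b] @ be, al @ [n, c, b] @ be) \<in> R"
  proof (rule cong_interval(2)[OF cong_rotate_pred[OF assms(1) perm(1)] perm(2)])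
    show "weak_le (al @ [c, b, n] @ be) (al @ [c, n, b] @ be)"
      and "weak_le (al @ [c, n, b] @ be) (al @ [n, c, b] @ be)"
      unfolding weak_le_def using d assms pred by (auto simp: inv_set_simps)
  qed
  moreover have "is_meet n (al @ [n, b, c] @ be) (al @ [n, c, b] @ be) (al @ [n, b, c] @ be)"
    by (rule is_meet_if_inv_set_Int[OF perm(3)]) (use d assms pred in \<open>auto simp: inv_set_simps\<close>)
  moreover have "is_meet n (al @ [n, b, c] @ be) (al @ [c, n, b] @ be) (al @ [b, c, n] @ be)"
    unfolding is_meet_def weak_le_def
  proof (intro conjI ballI impI perm(4))
    show "inv_set (al @ [b, c, n] @ be) \<subseteq> inv_set (al @ [n, b, c] @ be)"
      and "inv_set (al @ [b, c, n] @ be) \<subseteq> inv_set (al @ [c, n, b] @ be)"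
      using d assms pred by (auto simp: inv_set_simps)
    fix s assume "s \<in> perms n" and
      s: "inv_set s \<subseteq> inv_set (al @ [n, b, c] @ be) \<and> inv_set s \<subseteq> inv_set (al @ [c, n, b] @ be)"
    moreover have "(n, c) \<notin> inv_set (al @ [c, n, b] @ be)" "(c, b) \<notin> inv_set (al @ [n, b, c] @ be)"
      using d pred inv_set_less inv_set_subset[of al] inv_set_subset[of be]
      by (auto simp: inv_set_simps)
    ultimately have "(n, b) \<notin> inv_set s"
      using inv_set_cotrans[of s n b c] assms pred unfolding perms_def by auto
    moreover have "inv_set (al @ [n, b, c] @ be) \<inter> inv_set (al @ [c, n, b] @ be)
        \<subseteq> inv_set (al @ [b, c, n] @ be) \<union> {(n, b)}"
      using d assms pred by (auto simp: inv_set_simps)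
    ultimately show "inv_set s \<subseteq> inv_set (al @ [b, c, n] @ be)" using s by blast
  qed
  ultimately have "(al @ [b, c, n] @ be, al @ [n, b, c] @ be) \<in> R"
    using cong_meet cong_refl[OF perm(3)] cong_sym by blast
  then show ?thesis
    by (rule cong_interval(2)[OF _ p])
      (use d assms pred in \<open>auto simp: weak_le_def inv_set_simps\<close>)
qed

lemma cong_swap_top:
  assumes p: "al @ [b, n] @ be \<in> perms n"
  shows "(al @ [b, n] @ be, al @ [n, b] @ be) \<in> R"
proof -
  have d: "distinct (al @ [b, n] @ be)" and st: "set (al @ [b, n] @ be) = {1..n}"
    using p unfolding perms_def by blast+
  have p': "al @ [n, b] @ be \<in> perms n" using p unfolding perms_def by auto
  have small: "x < c" if "x \<in> set (al @ [b, n] @ be)" "x \<noteq> c" "x \<noteq> n" for x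
  proof -
    have "x \<in> {1..n}" using that(1) st by blast
    then show ?thesis using that(2,3) pred by auto
  qed
  have "c \<in> set (al @ [b, n] @ be)" using st pred by auto
  then consider "b = c" | "b < c" "c \<in> set al" | "b < c" "c \<in> set be"
    using small[of b] d pred by fastforce
  then show ?thesis
  proof cases
    case 1
    then show ?thesis using cong_swap_pred p by simp
  next
    case 2
    then obtain a1 a2 where al: "al = a1 @ c # a2" by (meson split_list)
    have d': "distinct (a1 @ c # a2 @ [b, n] @ be)" and a2: "\<forall>x\<in>set a2. x < c"
      using d small unfolding al by auto
    have "((a1 @ a2) @ [c, b, n] @ be, (a1 @ a2) @ [c, n, b] @ be) \<in> R"
      by (rule cong_swap_top_right_of_pred[OF 2(1)]) (use p in \<open>auto simp: al perms_def\<close>)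
    moreover have "is_join n ((a1 @ a2) @ [c, b, n] @ be) (al @ [b, n] @ be) (al @ [b, n] @ be)"
      by (rule is_join_if_inv_set_Un[OF p]) (use d' a2 2 pred in \<open>auto simp: inv_set_simps al\<close>)
    moreover have "is_join n ((a1 @ a2) @ [c, n, b] @ be) (al @ [b, n] @ be) (al @ [n, b] @ be)"
      by (rule is_join_if_inv_set_Un[OF p']) (use d' a2 2 pred in \<open>auto simp: inv_set_simps al\<close>)
    ultimately show ?thesis using cong_join cong_refl[OF p] by blast
  next
    case 3
    then obtain b1 b2 where be: "be = b1 @ c # b2" by (meson split_list)
    have d': "distinct (al @ [b, n] @ b1 @ c # b2)" and b1: "\<forall>x\<in>set b1. x < c"
      using d small unfolding be by auto
    have "(al @ [b, n, c] @ (b1 @ b2), al @ [n, b, c] @ (b1 @ b2)) \<in> R"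
      by (rule cong_swap_top_left_of_pred[OF 3(1)]) (use p in \<open>auto simp: be perms_def\<close>)
    moreover have "is_meet n (al @ [b, n, c] @ (b1 @ b2)) (al @ [n, b] @ be) (al @ [b, n] @ be)"
      by (rule is_meet_if_inv_set_Int[OF p]) (use d' b1 3 pred in \<open>auto simp: inv_set_simps be\<close>)
    moreover have "is_meet n (al @ [n, b, c] @ (b1 @ b2)) (al @ [n, b] @ be) (al @ [n, b] @ be)"
      by (rule is_meet_if_inv_set_Int[OF p']) (use d' b1 3 pred in \<open>auto simp: inv_set_simps be\<close>)
    ultimately show ?thesis using cong_meet cong_refl[OF p'] by blast
  qed
qed

end

lemma ins_max_in_perms:
  assumes "p \<in> perms m"
  shows "ins_max i p \<in> perms (Suc m)"
proof -
  have "distinct (take (i - 1) p @ drop (i - 1) p)" "set (take (i - 1) p @ drop (i - 1) p) = {1..m}"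
    using assms unfolding perms_def by simp_all
  then show ?thesis
    using length_perms[OF assms] unfolding perms_def ins_max_def
    by (simp only: distinct_append set_append) (auto; metis Un_iff atLeastAtMost_iff lessI not_less)
qed

lemma ins_max_around:
  assumes "p = al @ b # be"
  shows "ins_max (Suc (length al)) p = al @ [Suc (length p), b] @ be"
    and "ins_max (Suc (length al) + 1) p = al @ [b, Suc (length p)] @ be"
  using assms unfolding ins_max_def by simp_all

theorem mainTheorem3:
  fixes n :: nat and R :: "(nat list \<times> nat list) set"
  assumes "n \<ge> 2"
    and "lattice_congruence n R"
  shows "((id_perm n, ins_max (n - 1) (id_perm (n - 1))) \<in> R
            \<longleftrightarrow> (\<exists>p\<in>perms (n - 1). \<forall>i. 1 \<le> i \<and> i < n \<longrightarrow> (ins_max i p, ins_max (i + 1) p) \<in> R))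
       \<and> ((\<exists>p\<in>perms (n - 1). \<forall>i. 1 \<le> i \<and> i < n \<longrightarrow> (ins_max i p, ins_max (i + 1) p) \<in> R)
            \<longleftrightarrow> (\<forall>p\<in>perms (n - 1). \<forall>i. 1 \<le> i \<and> i < n \<longrightarrow> (ins_max i p, ins_max (i + 1) p) \<in> R))"
proof -
  interpret weak_order_congruence n R by unfold_locales (rule assms(2))
  define c where "c = n - 1"
  have c: "0 < c" "n = Suc c" using assms(1) unfolding c_def by auto
  have all_contracted: "(ins_max i p, ins_max (i + 1) p) \<in> R"
    if id_cong: "(id_perm n, ins_max c (id_perm c)) \<in> R"
      and perm: "p \<in> perms c" and i: "1 \<le> i" "i < n" for p i
  proof -
    interpret pred_swap_contracted n R c using c id_cong by unfold_locales
    have "i - 1 < length p" using length_perms[OF perm] i c by simp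
    then obtain al b be where p: "p = al @ b # be" and i_eq: "i = Suc (length al)"
      using id_take_nth_drop i(1) by fastforce
    have "ins_max (i + 1) p \<in> perms n" using ins_max_in_perms[OF perm] c by simp
    then show ?thesis
      using cong_swap_top cong_sym ins_max_around[OF p] length_perms[OF perm] c i_eq by auto
  qed
  have id_cong: "(id_perm n, ins_max c (id_perm c)) \<in> R"
    if p: "p \<in> perms c" and cong: "\<forall>i. 1 \<le> i \<and> i < n \<longrightarrow> (ins_max i p, ins_max (i + 1) p) \<in> R" for p
  proof -
    have "c \<in> set p" using p c unfolding perms_def by auto
    then obtain al be where "p = al @ c # be" by (meson split_list)
    moreover have "length p = c" using length_perms[OF p] .
    ultimately have "(al @ [n, c] @ be, al @ [c, n] @ be) \<in> R"
      using cong[rule_format, of "Suc (length al)"] ins_max_around c by auto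
    then show ?thesis by (rule id_cong_pred_swap_if_cong_swap[OF c])
  qed
  show ?thesis using all_contracted id_cong id_perm_in_perms unfolding c_def by blast
qed

end
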